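(* For $1\le i\le r$, $C_{i,r}(a)=G_{i,r-i+2}(a)$ as polynomials in $a$.
   Context: Bernoulli polynomials $B_n(a)$: $\sum_{n\ge0}B_n(a)x^n/n!=xe^{ax}/(e^x-1)$. For $1\le i\le r$, let $S_{i,r}$ be the set of $(n_1,\dots,n_r)\in\mathbb Z_{\ge0}^r$ with $n_1+\dots+n_r=r$, $n_1+\dots+n_j<j$ ($1\le j<i$), and $n_{j+1}+\dots+n_r\le r-j$ ($i\le j<r$), and $C_{i,r}(a)=(-1)^r\sum_{(n_1,\dots,n_r)\in S_{i,r}}\prod_{j=1}^r\frac{B_{n_j}(a)}{n_j!}$. Let $L(a,t)=\sum_{n\ge1}\lambda_n(a)t^n\in\mathbb Q[a][[t]]$ be the compositional inverse (in $t$) of $e^{-at}(e^t-1)$, equivalently the unique such series with $e^{L(a,t)}(1-te^{(a-1)L(a,t)})=1$. The generalized Gregory polynomials $G_{m,n}(a)$ are defined by \[ \sum_{m,n\ge0}G_{m,n}(a)x^my^n=\frac{yL(a,-x)^2-xL(a,-y)^2}{-L(a,-x)+L(a,-y)}. \] *)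

theory Defs
  imports "HOL-Computational_Algebra.Computational_Algebra"
begin

text \<open>All objects live in Q[a] = rat poly (the variable a is the polynomial variable).\<close>

definition pa :: "rat poly" where "pa = [:0, 1:]"

definition expc :: "rat poly \<Rightarrow> rat poly fps" where
  "expc c = Abs_fps (\<lambda>n. smult (1 / fact n) (c ^ n))"

definition bern_egf :: "rat poly fps" where
  "bern_egf = (THE f. (expc 1 - 1) * f = fps_X * expc pa)"

definition bernpoly :: "nat \<Rightarrow> rat poly" where
  "bernpoly n = of_nat (fact n) * (bern_egf $ n)"

definition S_set :: "nat \<Rightarrow> nat \<Rightarrow> nat list set" where
  "S_set i r = {ns. length ns = r \<and> sum_list ns = r
      \<and> (\<forall>j. 1 \<le> j \<and> j < i \<longrightarrow> sum_list (take j ns) < j)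
      \<and> (\<forall>j. i \<le> j \<and> j < r \<longrightarrow> sum_list (drop j ns) \<le> r - j)}"

definition C_poly :: "nat \<Rightarrow> nat \<Rightarrow> rat poly" where
  "C_poly i r = (-1) ^ r *
     (\<Sum>ns\<in>S_set i r. \<Prod>n\<leftarrow>ns. smult (1 / fact n) (bernpoly n))"

definition F_ser :: "rat poly fps" where
  "F_ser = expc (- pa) * (expc 1 - 1)"

definition L_ser :: "rat poly fps" where
  "L_ser = (THE L. L $ 0 = 0 \<and> F_ser oo L = fps_X \<and> L oo F_ser = fps_X)"

text \<open>Bivariate series in x,y over Q[a]: element H of type rat poly fps fps,
  H $ m $ n is the coefficient of x^m y^n.\<close>
definition Lmx :: "rat poly fps fps" where
  "Lmx = Abs_fps (\<lambda>m. fps_const ((-1) ^ m * (L_ser $ m)))"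

definition Lmy :: "rat poly fps fps" where
  "Lmy = fps_const (Abs_fps (\<lambda>n. (-1) ^ n * (L_ser $ n)))"

definition xv :: "rat poly fps fps" where "xv = fps_X"
definition yv :: "rat poly fps fps" where "yv = fps_const fps_X"

definition G_gen :: "rat poly fps fps" where
  "G_gen = (THE H. H * (- Lmx + Lmy) = yv * Lmx ^ 2 - xv * Lmy ^ 2)"

definition G_poly :: "nat \<Rightarrow> nat \<Rightarrow> rat poly" where
  "G_poly m n = G_gen $ m $ n"

end

theory Submission
  imports Defs
begin

(*
  Let beta(t) = sum B_n(a) t^n/n!. Then e^{-at}(e^t - 1) = t/beta(t), so its compositional
  inverse L solves L = t beta(L). Peeling off the first factor of this fixed point expresses
  [t^k] L^h as a sum, over Lukasiewicz paths from height h, of products of coefficients of beta.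
  Cutting a tuple of S_{i,r} at position i into a reversed path, a middle entry and a path gives
    C_{i,r} = (-1)^r sum_{h,s} [t^{i-1}] L^h * beta_{h+s+1} * [t^{r-i+1}] L^{s+1}.
  On the other side put ell(t) = L(-t), so ell(t) = -t beta(ell(t)). The divided difference
  P(t,y) = ell(y) (beta(t) - beta(ell(y))) / (t - ell(y)) turns the defining relation of the
  generalized Gregory polynomials into the closed form G = x y P(ell(x), y) - y ell(x), whose
  coefficient of x^i y^{r-i+2} is the same double sum.
*)

section \<open>The Bernoulli generating function and the series \<open>L\<close>\<close>

lemma expc_nth: "expc c $ n = smult (1 / fact n) (c ^ n)"
  by (simp add: expc_def)

lemma smult_sum_right: "smult c (sum f A) = (\<Sum>x\<in>A. smult c (f x))"
  by (induct A rule: infinite_finite_induct) (simp_all add: smult_add_right)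

lemma expc_add: "expc (c + d) = expc c * expc d"
proof (rule fps_ext)
  fix n
  have "(expc c * expc d) $ n
      = (\<Sum>k\<le>n. smult (1 / fact k) (c ^ k) * smult (1 / fact (n - k)) (d ^ (n - k)))"
    by (simp add: fps_mult_nth expc_nth atLeast0AtMost)
  also have "\<dots> = (\<Sum>k\<le>n. smult (1 / fact n) (of_nat (n choose k) * c ^ k * d ^ (n - k)))"
  proof (rule sum.cong[OF refl])
    fix k assume "k \<in> {..n}"
    then have "1 / fact k * (1 / fact (n - k)) = 1 / fact n * (of_nat (n choose k) :: rat)"
      by (simp add: binomial_fact field_simps)
    then show "smult (1 / fact k) (c ^ k) * smult (1 / fact (n - k)) (d ^ (n - k))
        = smult (1 / fact n) (of_nat (n choose k) * c ^ k * d ^ (n - k))"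
      by (simp add: of_nat_poly smult_smult mult_ac)
  qed
  also have "\<dots> = smult (1 / fact n) ((c + d) ^ n)"
    by (simp add: binomial_ring smult_sum_right mult_ac)
  finally show "expc (c + d) $ n = (expc c * expc d) $ n"
    by (simp add: expc_nth)
qed

lemma expc_0: "expc 0 = 1"
  by (rule fps_ext) (simp add: expc_nth)

lemma expc_1_minus_1_eq: "expc 1 - 1 = fps_X * Abs_fps (\<lambda>n. smult (1 / fact (Suc n)) 1)"
proof (rule fps_ext)
  fix n
  show "(expc 1 - 1) $ n = (fps_X * Abs_fps (\<lambda>n. smult (1 / fact (Suc n)) 1)) $ n"
    by (cases n) (simp_all add: expc_nth)
qed

lemma bern_egf_eq: "(expc 1 - 1) * bern_egf = fps_X * expc pa"
proof -
  define q :: "rat poly fps" where "q = Abs_fps (\<lambda>n. smult (1 / fact (Suc n)) 1)"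
  define f where "f = fps_right_inverse q 1 * expc pa"
  have "q * fps_right_inverse q 1 = 1"
    by (rule fps_right_inverse) (simp add: q_def)
  then have f: "(expc 1 - 1) * f = fps_X * expc pa"
    unfolding expc_1_minus_1_eq f_def q_def[symmetric] by (metis mult.assoc mult_1)
  have "(expc 1 - 1 :: rat poly fps) $ 1 \<noteq> 0"
    by (simp add: expc_nth)
  then have "expc 1 - 1 \<noteq> (0 :: rat poly fps)"
    by force
  with f have "\<exists>!f. (expc 1 - 1) * f = fps_X * expc pa"
    by (metis mult_left_cancel)
  then show ?thesis
    unfolding bern_egf_def by (rule theI')
qed

lemma bern_egf_nth_0: "bern_egf $ 0 = 1"
proof -
  have "((expc 1 - 1) * bern_egf) $ 1 = (fps_X * expc pa) $ 1"
    by (simp add: bern_egf_eq)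
  then show ?thesis
    by (simp add: fps_mult_nth expc_nth flip: one_pCons)
qed

lemma F_ser_mult_bern_egf: "F_ser * bern_egf = fps_X"
proof -
  have "F_ser * bern_egf = expc (- pa) * (fps_X * expc pa)"
    by (simp add: F_ser_def mult.assoc bern_egf_eq)
  also have "\<dots> = fps_X * expc (- pa + pa)"
    by (simp only: expc_add mult_ac)
  finally show ?thesis
    by (simp add: expc_0)
qed

lemma F_ser_nth_0: "F_ser $ 0 = 0"
  by (simp add: F_ser_def expc_nth)

lemma F_ser_nth_1: "F_ser $ 1 = 1"
  by (simp add: F_ser_def expc_nth fps_mult_nth flip: one_pCons)

text \<open>The library's \<open>fps_inv\<close> requires a field; when \<open>a $ 1 = 1\<close> its recursion needs no division.\<close>

fun fps_comp_inv_coeff :: "'a::comm_ring_1 fps \<Rightarrow> nat \<Rightarrow> 'a" where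
  "fps_comp_inv_coeff a 0 = 0"
| "fps_comp_inv_coeff a (Suc n) =
     fps_X $ Suc n - (\<Sum>i\<le>n. fps_comp_inv_coeff a i * (a ^ i) $ Suc n)"

definition fps_comp_inv :: "'a::comm_ring_1 fps \<Rightarrow> 'a fps" where
  "fps_comp_inv a = Abs_fps (fps_comp_inv_coeff a)"

lemma fps_comp_inv_nth_0 [simp]: "fps_comp_inv a $ 0 = 0"
  by (simp add: fps_comp_inv_def)

lemma fps_comp_inv_compose:
  assumes a0: "a $ 0 = 0" and a1: "a $ 1 = 1"
  shows "fps_comp_inv a oo a = fps_X"
proof (rule fps_ext)
  fix n
  show "(fps_comp_inv a oo a) $ n = fps_X $ n"
  proof (cases n)
    case 0
    then show ?thesis
      by (simp add: fps_compose_nth)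
  next
    case (Suc m)
    have "(fps_comp_inv a oo a) $ n
        = (\<Sum>i\<le>m. fps_comp_inv a $ i * (a ^ i) $ n) + fps_comp_inv a $ n * (a $ 1) ^ n"
      by (simp add: Suc fps_compose_nth atLeast0AtMost startsby_zero_power_nth_same[OF a0]
          del: power_Suc)
    also have "\<dots> = fps_X $ n"
      using a1 by (simp add: Suc fps_comp_inv_def)
    finally show ?thesis .
  qed
qed

lemma compose_fps_comp_inv:
  fixes a :: "'a::idom fps"
  assumes a0: "a $ 0 = 0" and a1: "a $ 1 = 1"
  shows "a oo fps_comp_inv a = fps_X"
proof -
  have "(a oo fps_comp_inv a) oo a = a oo (fps_comp_inv a oo a)"
    by (simp add: fps_compose_assoc[OF a0])
  also have "\<dots> = fps_X oo a"
    by (simp add: fps_comp_inv_compose[OF a0 a1] a0)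
  finally show ?thesis
    using fps_compose_inj_right[OF a0] a1 by simp
qed

lemma L_ser_props: "L_ser $ 0 = 0 \<and> F_ser oo L_ser = fps_X \<and> L_ser oo F_ser = fps_X"
proof -
  let ?L = "fps_comp_inv F_ser"
  have inv: "F_ser oo ?L = fps_X" "?L oo F_ser = fps_X"
    using compose_fps_comp_inv fps_comp_inv_compose F_ser_nth_0 F_ser_nth_1 by blast+
  have "L = ?L" if "L $ 0 = 0" "L oo F_ser = fps_X" for L
  proof -
    have "L = L oo (F_ser oo ?L)"
      by (simp add: inv \<open>L $ 0 = 0\<close>)
    also have "\<dots> = ?L"
      by (simp add: fps_compose_assoc F_ser_nth_0 that(2))
    finally show ?thesis .
  qed
  with inv have "\<exists>!L. L $ 0 = 0 \<and> F_ser oo L = fps_X \<and> L oo F_ser = fps_X"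
    by (metis fps_comp_inv_nth_0)
  then show ?thesis
    unfolding L_ser_def by (rule theI')
qed

lemma L_ser_nth_0: "L_ser $ 0 = 0"
  using L_ser_props by blast

lemma L_ser_fixpoint: "fps_X * (bern_egf oo L_ser) = L_ser"
proof -
  have "(F_ser * bern_egf) oo L_ser = fps_X oo L_ser"
    by (simp add: F_ser_mult_bern_egf)
  then show ?thesis
    using L_ser_props by (simp add: fps_compose_mult_distrib L_ser_nth_0)
qed

section \<open>Powers of a fixed point of \<open>L = t b(L)\<close>\<close>

lemma fps_fixpoint_power_nth_Suc:
  fixes b L :: "'a::idom fps"
  assumes L: "fps_X * (b oo L) = L"
  shows "(L ^ Suc m) $ Suc k = (\<Sum>c\<le>Suc k. b $ c * (L ^ (m + c)) $ k)"
proof -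
  have L0: "L $ 0 = 0"
    using arg_cong[OF L, of "\<lambda>f. f $ 0"] by simp
  define g where "g i = (fps_X ^ m * b) $ i * (L ^ i) $ k" for i
  have "L ^ Suc m = (fps_X * (b oo L)) * (fps_X ^ m oo L)"
    by (simp add: fps_compose_power[OF L0, symmetric] L0 L)
  also have "\<dots> = fps_X * ((fps_X ^ m * b) oo L)"
    by (simp add: fps_compose_mult_distrib[OF L0] mult_ac)
  finally have "(L ^ Suc m) $ Suc k = (\<Sum>i=0..k. g i)"
    by (simp add: fps_compose_nth g_def)
  also have "\<dots> = (\<Sum>i=0..<m + Suc (Suc k). g i)"
    by (rule sum.mono_neutral_left) (auto simp: g_def startsby_zero_power_prefix[OF L0])
  also have "\<dots> = (\<Sum>i=m..<m + Suc (Suc k). g i)"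
    by (rule sum.mono_neutral_right) (auto simp: g_def fps_X_power_mult_nth)
  also have "\<dots> = (\<Sum>i=0+m..<Suc (Suc k)+m. g i)"
    by (simp add: add.commute)
  also have "\<dots> = (\<Sum>c=0..<Suc (Suc k). g (c + m))"
    by (rule sum.shift_bounds_nat_ivl)
  also have "\<dots> = (\<Sum>c\<le>Suc k. b $ c * (L ^ (m + c)) $ k)"
    by (rule sum.cong) (auto simp: g_def fps_X_power_mult_nth add.commute)
  finally show ?thesis .
qed

lemma finite_lists_sum_bounded: "finite {ns :: nat list. length ns = k \<and> sum_list ns \<le> B}"
proof -
  have "{ns :: nat list. length ns = k \<and> sum_list ns \<le> B} \<subseteq> {ns. set ns \<subseteq> {..B} \<and> length ns = k}"
    using member_le_sum_list by fastforce
  then show ?thesis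
    by (rule finite_subset) (simp add: finite_lists_length_eq)
qed

lemma sum_lists_by_head:
  fixes A :: "nat list set"
  assumes "finite A" and "\<And>ns. ns \<in> A \<Longrightarrow> ns \<noteq> [] \<and> hd ns \<le> N"
  shows "sum f A = (\<Sum>c\<le>N. \<Sum>ns\<in>{ns. c # ns \<in> A}. f (c # ns))"
proof -
  have "sum f A = (\<Sum>(c, ns)\<in>Sigma {..N} (\<lambda>c. {ns. c # ns \<in> A}). f (c # ns))"
    by (rule sum.reindex_bij_witness[where i="\<lambda>(c, ns). c # ns" and j="\<lambda>ns. (hd ns, tl ns)"])
      (use assms(2) in \<open>auto simp: neq_Nil_conv\<close>)
  also have "\<dots> = (\<Sum>c\<le>N. \<Sum>ns\<in>{ns. c # ns \<in> A}. f (c # ns))"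
  proof (rule sum.Sigma[symmetric])
    have "{ns. c # ns \<in> A} \<subseteq> tl ` A" for c
      by (force simp: image_iff)
    then show "\<forall>c\<in>{..N}. finite {ns. c # ns \<in> A}"
      using finite_subset assms(1) by blast
  qed simp
  finally show ?thesis .
qed

text \<open>Lukasiewicz paths with steps \<open>n\<^sub>j - 1\<close> that start at height \<open>h\<close> and first reach \<open>0\<close> at step \<open>k\<close>.\<close>

definition lukasiewicz_lists :: "nat \<Rightarrow> nat \<Rightarrow> nat list set" where
  "lukasiewicz_lists h k = {ns. length ns = k \<and> sum_list ns + h = k
      \<and> (\<forall>j<k. j < sum_list (take j ns) + h)}"

lemma lukasiewicz_listsD: "ns \<in> lukasiewicz_lists h k \<Longrightarrow> length ns = k \<and> sum_list ns + h = k"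
  by (simp add: lukasiewicz_lists_def)

lemma finite_lukasiewicz_lists: "finite (lukasiewicz_lists h k)"
  by (rule finite_subset[OF _ finite_lists_sum_bounded[of k k]]) (auto simp: lukasiewicz_lists_def)

lemma lukasiewicz_lists_0: "lukasiewicz_lists h 0 = (if h = 0 then {[]} else {})"
  by (auto simp: lukasiewicz_lists_def)

lemma lukasiewicz_lists_0_Suc: "lukasiewicz_lists 0 (Suc k) = {}"
  by (auto simp: lukasiewicz_lists_def)

lemma lukasiewicz_lists_Cons:
  "{ns. c # ns \<in> lukasiewicz_lists (Suc m) (Suc k)} = lukasiewicz_lists (m + c) k"
  by (auto simp: lukasiewicz_lists_def All_less_Suc2)

text \<open>A combinatorial form of Lagrange inversion.\<close>

lemma fps_fixpoint_power_nth:
  fixes b L :: "'a::idom fps"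
  assumes L: "fps_X * (b oo L) = L"
  shows "(L ^ h) $ k = (\<Sum>ns\<in>lukasiewicz_lists h k. \<Prod>n\<leftarrow>ns. b $ n)"
proof (induction k arbitrary: h)
  case 0
  have "L $ 0 = 0"
    using arg_cong[OF L, of "\<lambda>f. f $ 0"] by simp
  then show ?case
    by (simp add: lukasiewicz_lists_0)
next
  case (Suc k)
  show ?case
  proof (cases h)
    case 0
    then show ?thesis
      by (simp add: lukasiewicz_lists_0_Suc)
  next
    case (Suc m)
    have "ns \<noteq> [] \<and> hd ns \<le> Suc k" if "ns \<in> lukasiewicz_lists h (Suc k)" for ns
      using that by (cases ns) (auto simp: lukasiewicz_lists_def)
    then have "(\<Sum>ns\<in>lukasiewicz_lists h (Suc k). \<Prod>n\<leftarrow>ns. b $ n)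
        = (\<Sum>c\<le>Suc k. \<Sum>ns\<in>{ns. c # ns \<in> lukasiewicz_lists h (Suc k)}. \<Prod>n\<leftarrow>c # ns. b $ n)"
      by (rule sum_lists_by_head[OF finite_lukasiewicz_lists])
    also have "\<dots> = (\<Sum>c\<le>Suc k. \<Sum>ns\<in>lukasiewicz_lists (m + c) k. b $ c * (\<Prod>n\<leftarrow>ns. b $ n))"
      by (simp only: Suc lukasiewicz_lists_Cons list.map prod_list.Cons)
    also have "\<dots> = (\<Sum>c\<le>Suc k. b $ c * (L ^ (m + c)) $ k)"
      by (simp only: Suc.IH sum_distrib_left)
    also have "\<dots> = (L ^ h) $ Suc k"
      by (simp only: Suc fps_fixpoint_power_nth_Suc[OF L])
    finally show ?thesis
      by (rule sym)
  qed
qed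

section \<open>Decomposition of \<open>S_set\<close>\<close>

lemma sum_list_take_add_drop: "sum_list (take m ns) + sum_list (drop m ns) = sum_list (ns :: nat list)"
  by (metis append_take_drop_id sum_list_append)

lemma rev_in_lukasiewicz_lists:
  "rev ns \<in> lukasiewicz_lists h k \<longleftrightarrow>
     length ns = k \<and> sum_list ns + h = k \<and> (\<forall>j. 1 \<le> j \<and> j \<le> k \<longrightarrow> sum_list (take j ns) < j)"
proof -
  have "(\<forall>j<k. j < sum_list (take j (rev ns)) + h) \<longleftrightarrow> (\<forall>j. 1 \<le> j \<and> j \<le> k \<longrightarrow> sum_list (take j ns) < j)"
    if len: "length ns = k" and sum: "sum_list ns + h = k"
  proof -
    have split: "sum_list (take j (rev ns)) + sum_list (take (k - j) ns) + h = k" if "j \<le> k" for j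
      using sum_list_take_add_drop[of "k - j" ns] len sum that by (simp add: take_rev)
    show ?thesis
    proof safe
      fix j assume "\<forall>j<k. j < sum_list (take j (rev ns)) + h" "1 \<le> j" "j \<le> k"
      then have "k - j < sum_list (take (k - j) (rev ns)) + h"
        by simp
      then show "sum_list (take j ns) < j"
        using split[of "k - j"] \<open>j \<le> k\<close> by simp
    next
      fix j assume "\<forall>j. 1 \<le> j \<and> j \<le> k \<longrightarrow> sum_list (take j ns) < j" "j < k"
      then have "sum_list (take (k - j) ns) < k - j"
        by simp
      then show "j < sum_list (take j (rev ns)) + h"
        using split[of j] \<open>j < k\<close> by simp
    qed
  qed
  then show ?thesis
    by (auto simp: lukasiewicz_lists_def)
qed

lemma snoc_0_in_lukasiewicz_lists:
  "ns @ [0] \<in> lukasiewicz_lists (Suc s) (Suc l) \<longleftrightarrow>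
     length ns = l \<and> sum_list ns + s = l \<and> (\<forall>m<l. sum_list (drop m ns) + m \<le> l)"
proof -
  have "(\<forall>j<Suc l. j < sum_list (take j (ns @ [0])) + Suc s) \<longleftrightarrow> (\<forall>m<l. sum_list (drop m ns) + m \<le> l)"
    if len: "length ns = l" and sum: "sum_list ns + s = l"
  proof -
    have "j < sum_list (take j (ns @ [0])) + Suc s \<longleftrightarrow> sum_list (drop j ns) + j \<le> l" if "j \<le> l" for j
      using sum_list_take_add_drop[of j ns] len sum that by auto
    then have "(\<forall>j<Suc l. j < sum_list (take j (ns @ [0])) + Suc s)
        \<longleftrightarrow> (\<forall>m\<le>l. sum_list (drop m ns) + m \<le> l)"
      by (simp add: less_Suc_eq_le)
    also have "\<dots> \<longleftrightarrow> (\<forall>m<l. sum_list (drop m ns) + m \<le> l)"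
      using len by (auto simp: le_less)
    finally show ?thesis .
  qed
  then show ?thesis
    by (auto simp: lukasiewicz_lists_def)
qed

lemma lukasiewicz_lists_last_0:
  assumes "ns \<in> lukasiewicz_lists (Suc s) (Suc l)"
  shows "butlast ns @ [0] = ns"
proof -
  have len: "length ns = Suc l" and sum: "sum_list ns + Suc s = Suc l"
    and "l < sum_list (take l ns) + Suc s"
    using assms by (auto simp: lukasiewicz_lists_def)
  moreover have split: "butlast ns @ [last ns] = ns"
    using len by (intro append_butlast_last_id) auto
  moreover have "sum_list ns = sum_list (butlast ns) + last ns"
    by (subst split[symmetric]) simp
  ultimately have "last ns = 0"
    by (simp add: butlast_conv_take)
  with split show ?thesis
    by simp
qed

lemma append_Cons_in_S_set_iff:
  assumes lenA: "length A = k" and lenC: "length C = l"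
  shows "A @ c # C \<in> S_set (Suc k) (Suc k + l) \<longleftrightarrow> sum_list A + c + sum_list C = Suc k + l
    \<and> (\<forall>j. 1 \<le> j \<and> j \<le> k \<longrightarrow> sum_list (take j A) < j) \<and> (\<forall>m<l. sum_list (drop m C) + m \<le> l)"
proof -
  have pre: "(\<forall>j. 1 \<le> j \<and> j < Suc k \<longrightarrow> sum_list (take j (A @ c # C)) < j)
      \<longleftrightarrow> (\<forall>j. 1 \<le> j \<and> j \<le> k \<longrightarrow> sum_list (take j A) < j)"
    using lenA by (auto simp: less_Suc_eq_le)
  have suf: "(\<forall>j. Suc k \<le> j \<and> j < Suc k + l \<longrightarrow> sum_list (drop j (A @ c # C)) \<le> Suc k + l - j)
      \<longleftrightarrow> (\<forall>m<l. sum_list (drop m C) + m \<le> l)"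
  proof safe
    fix m assume H: "\<forall>j. Suc k \<le> j \<and> j < Suc k + l \<longrightarrow> sum_list (drop j (A @ c # C)) \<le> Suc k + l - j"
      and "m < l"
    then show "sum_list (drop m C) + m \<le> l"
      using lenA H[rule_format, of "Suc k + m"] by simp
  next
    fix j assume H: "\<forall>m<l. sum_list (drop m C) + m \<le> l" and "Suc k \<le> j" "j < Suc k + l"
    obtain m where "j = Suc k + m"
      using \<open>Suc k \<le> j\<close> le_Suc_ex by blast
    moreover have "m < l"
      using \<open>j < Suc k + l\<close> calculation by simp
    ultimately show "sum_list (drop j (A @ c # C)) \<le> Suc k + l - j"
      using lenA H[rule_format, of m] by simp
  qed
  show ?thesis
    unfolding S_set_def mem_Collect_eq pre suf using lenA lenC by (simp add: add.assoc)
qed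

lemma append_Cons_in_S_set:
  assumes lenA: "length A = k" and lenC: "length C = l"
  shows "A @ c # C \<in> S_set (Suc k) (Suc k + l) \<longleftrightarrow>
    (\<exists>h s. rev A \<in> lukasiewicz_lists h k \<and> C @ [0] \<in> lukasiewicz_lists (Suc s) (Suc l)
      \<and> c = h + s + 1)"
proof
  assume "A @ c # C \<in> S_set (Suc k) (Suc k + l)"
  then have sum: "sum_list A + c + sum_list C = Suc k + l"
    and P: "\<forall>j. 1 \<le> j \<and> j \<le> k \<longrightarrow> sum_list (take j A) < j"
    and Q: "\<forall>m<l. sum_list (drop m C) + m \<le> l"
    unfolding append_Cons_in_S_set_iff[OF lenA lenC] by blast+
  have "sum_list A \<le> k"
    using lenA P[rule_format, of k] by (cases k) auto
  moreover have "sum_list C \<le> l"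
    using lenC Q[rule_format, of 0] by (cases l) auto
  ultimately show "\<exists>h s. rev A \<in> lukasiewicz_lists h k \<and> C @ [0] \<in> lukasiewicz_lists (Suc s) (Suc l)
      \<and> c = h + s + 1"
    using sum lenA lenC P Q
    by (intro exI[of _ "k - sum_list A"] exI[of _ "l - sum_list C"])
      (simp add: rev_in_lukasiewicz_lists snoc_0_in_lukasiewicz_lists)
next
  assume "\<exists>h s. rev A \<in> lukasiewicz_lists h k \<and> C @ [0] \<in> lukasiewicz_lists (Suc s) (Suc l)
      \<and> c = h + s + 1"
  then obtain h s where "rev A \<in> lukasiewicz_lists h k" "C @ [0] \<in> lukasiewicz_lists (Suc s) (Suc l)"
    and "c = h + s + 1"
    by blast
  then show "A @ c # C \<in> S_set (Suc k) (Suc k + l)"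
    unfolding append_Cons_in_S_set_iff[OF lenA lenC]
    by (simp add: rev_in_lukasiewicz_lists snoc_0_in_lukasiewicz_lists)
qed

lemma sum_cartesian_product_mult:
  fixes f g :: "'b \<Rightarrow> 'a::comm_semiring_1"
  shows "(\<Sum>(a, c)\<in>A \<times> C. f a * x * g c) = sum f A * x * sum g C"
proof -
  have "sum f A * x * sum g C = (\<Sum>a\<in>A. f a * x) * sum g C"
    by (simp only: sum_distrib_right)
  also have "\<dots> = (\<Sum>(a, c)\<in>A \<times> C. f a * x * g c)"
    by (simp only: sum_product sum.cartesian_product)
  finally show ?thesis ..
qed

definition S_join :: "(nat \<times> nat) \<times> nat list \<times> nat list \<Rightarrow> nat list" where
  "S_join = (\<lambda>((h, s), (A, C)). rev A @ (h + s + 1) # butlast C)"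

lemma bij_betw_S_join:
  "bij_betw S_join (SIGMA (h, s):{..k} \<times> {..l}. lukasiewicz_lists h k \<times> lukasiewicz_lists (Suc s) (Suc l))
     (S_set (Suc k) (Suc k + l))"
proof -
  define T where "T = (SIGMA (h, s):{..k} \<times> {..l}. lukasiewicz_lists h k \<times> lukasiewicz_lists (Suc s) (Suc l))"
  define cut where "cut = (\<lambda>ns. ((k - sum_list (take k ns), l - sum_list (drop (Suc k) ns)),
    (rev (take k ns), drop (Suc k) ns @ [0])))"
  have "cut ns \<in> T \<and> S_join (cut ns) = ns" if ns: "ns \<in> S_set (Suc k) (Suc k + l)" for ns
  proof -
    have ns_eq: "ns = take k ns @ ns ! k # drop (Suc k) ns"
      using ns by (simp add: S_set_def id_take_nth_drop)
    with ns obtain h s where A: "rev (take k ns) \<in> lukasiewicz_lists h k"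
      and C: "drop (Suc k) ns @ [0] \<in> lukasiewicz_lists (Suc s) (Suc l)" and c: "ns ! k = h + s + 1"
      using append_Cons_in_S_set[of "take k ns" k "drop (Suc k) ns" l "ns ! k"]
      by (auto simp: S_set_def)
    have "k - sum_list (take k ns) = h" "l - sum_list (drop (Suc k) ns) = s"
      using lukasiewicz_listsD[OF A] lukasiewicz_listsD[OF C] by auto
    then show ?thesis
      using A C ns_eq c lukasiewicz_listsD[OF A] lukasiewicz_listsD[OF C]
      by (auto simp: cut_def T_def S_join_def)
  qed
  moreover have "S_join a \<in> S_set (Suc k) (Suc k + l) \<and> cut (S_join a) = a" if "a \<in> T" for a
  proof -
    obtain h s A C where a: "a = ((h, s), (A, C))"
      and A: "A \<in> lukasiewicz_lists h k" and C: "C \<in> lukasiewicz_lists (Suc s) (Suc l)"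
      using \<open>a \<in> T\<close> by (auto simp: T_def)
    have C_eq: "butlast C @ [0] = C"
      by (rule lukasiewicz_lists_last_0[OF C])
    have lens: "length A = k" "length (butlast C) = l" "sum_list A + h = k"
        "sum_list (butlast C) + s = l"
      using lukasiewicz_listsD[OF A] lukasiewicz_listsD[OF C] arg_cong[OF C_eq, of sum_list] by auto
    then have "k - sum_list A = h" "l - sum_list (butlast C) = s"
      by linarith+
    then show ?thesis
      using append_Cons_in_S_set[of "rev A" k "butlast C" l "h + s + 1"] A C C_eq lens
      by (auto simp: a S_join_def cut_def)
  qed
  ultimately show ?thesis
    unfolding T_def[symmetric] by (intro bij_betw_byWitness[where f'=cut]) auto
qed

lemma sum_S_set_prod_list:
  fixes \<beta> :: "nat \<Rightarrow> 'a::comm_semiring_1"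
  assumes \<beta>0: "\<beta> 0 = 1"
  shows "(\<Sum>ns\<in>S_set (Suc k) (Suc k + l). \<Prod>n\<leftarrow>ns. \<beta> n) =
    (\<Sum>h\<le>k. \<Sum>s\<le>l. (\<Sum>A\<in>lukasiewicz_lists h k. \<Prod>n\<leftarrow>A. \<beta> n) * \<beta> (h + s + 1)
       * (\<Sum>C\<in>lukasiewicz_lists (Suc s) (Suc l). \<Prod>n\<leftarrow>C. \<beta> n))"
proof -
  define T where "T = (SIGMA (h, s):{..k} \<times> {..l}. lukasiewicz_lists h k \<times> lukasiewicz_lists (Suc s) (Suc l))"
  define g where "g = (\<lambda>((h, s), (A, C)). (\<Prod>n\<leftarrow>A. \<beta> n) * \<beta> (h + s + 1) * (\<Prod>n\<leftarrow>C. \<beta> n))"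
  have prod_join: "(\<Prod>n\<leftarrow>S_join a. \<beta> n) = g a" if "a \<in> T" for a
  proof -
    obtain h s A C where a: "a = ((h, s), (A, C))" and C: "C \<in> lukasiewicz_lists (Suc s) (Suc l)"
      using \<open>a \<in> T\<close> by (auto simp: T_def)
    have "(\<Prod>n\<leftarrow>C. \<beta> n) = (\<Prod>n\<leftarrow>butlast C @ [0]. \<beta> n)"
      by (simp only: lukasiewicz_lists_last_0[OF C])
    then show ?thesis
      using \<beta>0 by (simp add: a S_join_def g_def mult_ac flip: rev_map)
  qed
  have "(\<Sum>ns\<in>S_set (Suc k) (Suc k + l). \<Prod>n\<leftarrow>ns. \<beta> n) = (\<Sum>a\<in>T. \<Prod>n\<leftarrow>S_join a. \<beta> n)"
    unfolding T_def by (rule sum.reindex_bij_betw[OF bij_betw_S_join, symmetric])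
  also have "\<dots> = sum g T"
    by (rule sum.cong) (simp_all add: prod_join)
  also have "\<dots> = (\<Sum>(h, s)\<in>{..k} \<times> {..l}.
      \<Sum>(A, C)\<in>lukasiewicz_lists h k \<times> lukasiewicz_lists (Suc s) (Suc l). g ((h, s), (A, C)))"
    unfolding T_def by (simp add: sum.Sigma finite_lukasiewicz_lists split_def)
  also have "\<dots> = (\<Sum>(h, s)\<in>{..k} \<times> {..l}. (\<Sum>A\<in>lukasiewicz_lists h k. \<Prod>n\<leftarrow>A. \<beta> n)
      * \<beta> (h + s + 1) * (\<Sum>C\<in>lukasiewicz_lists (Suc s) (Suc l). \<Prod>n\<leftarrow>C. \<beta> n))"
    by (rule sum.cong[OF refl]) (auto simp: g_def sum_cartesian_product_mult)
  also have "\<dots> = (\<Sum>h\<le>k. \<Sum>s\<le>l. (\<Sum>A\<in>lukasiewicz_lists h k. \<Prod>n\<leftarrow>A. \<beta> n) * \<beta> (h + s + 1)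
       * (\<Sum>C\<in>lukasiewicz_lists (Suc s) (Suc l). \<Prod>n\<leftarrow>C. \<beta> n))"
    by (rule sum.cartesian_product[symmetric])
  finally show ?thesis .
qed

section \<open>A closed form of the Gregory generating function\<close>

definition ell :: "rat poly fps" where
  "ell = L_ser oo - fps_X"

lemma ell_nth_0: "ell $ 0 = 0"
  by (simp add: ell_def fps_compose_uminus' L_ser_nth_0)

lemma ell_power_nth: "(ell ^ h) $ n = (-1) ^ n * (L_ser ^ h) $ n"
proof -
  have "ell ^ h = L_ser ^ h oo - fps_X"
    by (simp add: ell_def fps_compose_power)
  then show ?thesis
    by (simp add: fps_compose_uminus')
qed

lemma ell_fixpoint: "fps_X * (bern_egf oo ell) = - ell"
proof -
  have "(fps_X * (bern_egf oo L_ser)) oo - fps_X = ell"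
    by (simp add: L_ser_fixpoint ell_def)
  moreover have "(bern_egf oo L_ser) oo - fps_X = bern_egf oo ell"
    unfolding ell_def by (rule fps_compose_assoc[symmetric]) (simp_all add: L_ser_nth_0)
  ultimately have "- (fps_X * (bern_egf oo ell)) = ell"
    by (simp add: fps_compose_mult_distrib)
  then show ?thesis
    by (simp add: minus_equation_iff)
qed

lemma ell_nth_1: "ell $ 1 = -1"
proof -
  have "(fps_X * (bern_egf oo ell)) $ 1 = - ell $ 1"
    by (simp add: ell_fixpoint)
  then show ?thesis
    by (simp add: fps_compose_nth bern_egf_nth_0)
qed

definition fps_lift :: "'a::comm_ring_1 fps \<Rightarrow> 'a fps fps" where
  "fps_lift f = Abs_fps (\<lambda>m. fps_const (f $ m))"

lemma fps_lift_nth [simp]: "fps_lift f $ m = fps_const (f $ m)"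
  by (simp add: fps_lift_def)

lemma fps_const_sum: "fps_const (sum f A) = (\<Sum>a\<in>A. fps_const (f a))"
  by (induct A rule: infinite_finite_induct) (simp_all flip: fps_const_add)

lemma fps_lift_mult: "fps_lift (f * g) = fps_lift f * fps_lift g"
  by (rule fps_ext) (simp add: fps_mult_nth fps_const_sum)

lemma fps_lift_1: "fps_lift 1 = 1"
  by (rule fps_ext) simp

lemma fps_lift_power: "fps_lift (f ^ n) = fps_lift f ^ n"
  by (induct n) (simp_all add: fps_lift_1 fps_lift_mult)

lemma fps_lift_uminus: "fps_lift (- f) = - fps_lift f"
  by (rule fps_ext) simp

lemma fps_lift_X: "fps_lift fps_X = fps_X"
  by (rule fps_ext) (simp add: fps_X_def)

lemma fps_lift_compose: "fps_lift (f oo g) = fps_lift f oo fps_lift g"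
  by (rule fps_ext) (simp add: fps_compose_nth fps_const_sum flip: fps_const_mult fps_lift_power)

definition bern_tail :: "nat \<Rightarrow> rat poly fps" where
  "bern_tail h = Abs_fps (\<lambda>j. if j = 0 then 0 else bern_egf $ (h + j))"

lemma bern_tail_0: "bern_tail 0 = bern_egf - 1"
  by (rule fps_ext) (simp add: bern_tail_def bern_egf_nth_0)

lemma fps_X_mult_bern_tail_Suc:
  "fps_X * bern_tail (Suc h) = bern_tail h - fps_const (bern_egf $ Suc h) * fps_X"
  by (rule fps_ext) (auto simp: bern_tail_def le_Suc_eq)

lemma bern_tail_compose_ell_nth_Suc:
  "(bern_tail h oo ell) $ Suc l = (\<Sum>s\<le>l. bern_egf $ (h + s + 1) * (ell ^ (s + 1)) $ Suc l)"
  by (simp add: fps_compose_nth atLeast0AtMost sum.atMost_Suc_shift bern_tail_def del: sum.atMost_Suc)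

text \<open>With \<open>t\<close> the outer and \<open>y\<close> the inner variable this is the divided difference
  \<open>ell(y) (\<beta>(t) - \<beta>(ell(y))) / (t - ell(y)) = \<Sum>\<^sub>h t\<^sup>h \<Sum>\<^sub>j\<^sub>\<ge>\<^sub>1 \<beta>\<^sub>h\<^sub>+\<^sub>j ell(y)\<^sup>j\<close>.\<close>

definition bern_divdiff :: "rat poly fps fps" where
  "bern_divdiff = Abs_fps (\<lambda>h. bern_tail h oo ell)"

lemma bern_divdiff_mult:
  "bern_divdiff * (fps_X - fps_const ell) = fps_const ell * (fps_lift bern_egf - fps_const (bern_egf oo ell))"
proof (rule fps_ext)
  fix n
  show "(bern_divdiff * (fps_X - fps_const ell)) $ n
      = (fps_const ell * (fps_lift bern_egf - fps_const (bern_egf oo ell))) $ n"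
  proof (cases n)
    case 0
    then show ?thesis
      by (simp add: bern_divdiff_def bern_tail_0 fps_compose_sub_distrib bern_egf_nth_0 algebra_simps)
  next
    case (Suc h)
    have "ell * (bern_tail (Suc h) oo ell) = (bern_tail h oo ell) - fps_const (bern_egf $ Suc h) * ell"
      using arg_cong[OF fps_X_mult_bern_tail_Suc, of "\<lambda>f. f oo ell"]
      by (simp add: fps_compose_mult_distrib fps_compose_sub_distrib ell_nth_0)
    then show ?thesis
      by (simp add: Suc bern_divdiff_def algebra_simps)
  qed
qed

lemma Lmx_eq: "Lmx = fps_lift ell"
  by (simp add: Lmx_def fps_lift_def ell_def fps_compose_uminus')

lemma Lmy_eq: "Lmy = fps_const ell"
  by (simp add: Lmy_def ell_def fps_compose_uminus')

definition G_closed :: "rat poly fps fps" where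
  "G_closed = xv * yv * (bern_divdiff oo fps_lift ell) - yv * fps_lift ell"

lemma G_closed_mult: "G_closed * (- Lmx + Lmy) = yv * Lmx ^ 2 - xv * Lmy ^ 2"
proof -
  define X where "X = fps_lift ell"
  define Y :: "rat poly fps fps" where "Y = fps_const ell"
  define K where "K = bern_divdiff oo X"
  define B\<^sub>x where "B\<^sub>x = fps_lift (bern_egf oo ell)"
  define B\<^sub>y :: "rat poly fps fps" where "B\<^sub>y = fps_const (bern_egf oo ell)"
  have X0: "X $ 0 = 0"
    by (simp add: X_def ell_nth_0)
  have "(bern_divdiff * (fps_X - Y)) oo X = (Y * (fps_lift bern_egf - B\<^sub>y)) oo X"
    by (simp add: bern_divdiff_mult Y_def B\<^sub>y_def)
  moreover have "fps_lift bern_egf oo X = B\<^sub>x"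
    by (simp add: X_def B\<^sub>x_def fps_lift_compose)
  ultimately have K: "K * (X - Y) = Y * (B\<^sub>x - B\<^sub>y)"
    by (simp add: fps_compose_mult_distrib[OF X0] fps_compose_sub_distrib X0 K_def Y_def B\<^sub>y_def)
  have x: "fps_X * B\<^sub>x = - X"
    using arg_cong[OF ell_fixpoint, of fps_lift] by (simp add: fps_lift_mult fps_lift_X fps_lift_uminus B\<^sub>x_def X_def)
  have y: "yv * B\<^sub>y = - Y"
    using arg_cong[OF ell_fixpoint, of fps_const] by (simp add: yv_def B\<^sub>y_def Y_def flip: fps_const_mult)
  have "G_closed * (- Lmx + Lmy) = - (fps_X * yv) * (K * (X - Y)) + yv * X * (X - Y)"
    by (simp add: G_closed_def xv_def Lmx_eq Lmy_eq X_def Y_def K_def algebra_simps)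
  also have "\<dots> = - (yv * Y) * (fps_X * B\<^sub>x) + fps_X * Y * (yv * B\<^sub>y) + yv * X * (X - Y)"
    unfolding K by (simp add: algebra_simps)
  also have "\<dots> = yv * X ^ 2 - fps_X * Y ^ 2"
    unfolding x y by (simp add: algebra_simps power2_eq_square)
  finally show ?thesis
    by (simp add: xv_def Lmx_eq Lmy_eq X_def Y_def)
qed

lemma G_gen_eq: "G_gen = G_closed"
proof -
  have "(- Lmx + Lmy) $ 0 $ 1 \<noteq> 0"
    using ell_nth_1 by (simp add: Lmx_eq Lmy_eq ell_nth_0)
  then have nz: "- Lmx + Lmy \<noteq> 0"
    by force
  then have "\<exists>!H. H * (- Lmx + Lmy) = yv * Lmx ^ 2 - xv * Lmy ^ 2"
    using G_closed_mult by (metis mult_right_cancel)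
  then have "G_gen * (- Lmx + Lmy) = G_closed * (- Lmx + Lmy)"
    unfolding G_gen_def G_closed_mult by (rule theI')
  with nz show ?thesis
    by simp
qed

lemma G_poly_Suc_Suc_Suc:
  "G_poly (Suc k) (Suc (Suc l)) =
     (\<Sum>h\<le>k. \<Sum>s\<le>l. (ell ^ h) $ k * bern_egf $ (h + s + 1) * (ell ^ (s + 1)) $ Suc l)"
proof -
  define K where "K = bern_divdiff oo fps_lift ell"
  have "G_closed $ Suc k = fps_X * K $ k - fps_X * fps_const (ell $ Suc k)"
    by (simp add: G_closed_def K_def xv_def yv_def mult.assoc)
  then have "G_poly (Suc k) (Suc (Suc l)) = K $ k $ Suc l"
    by (simp add: G_poly_def G_gen_eq)
  also have "\<dots> = (\<Sum>h\<le>k. (ell ^ h) $ k * (bern_tail h oo ell) $ Suc l)"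
    by (simp add: K_def fps_compose_nth fps_sum_nth bern_divdiff_def atLeast0AtMost mult.commute
        flip: fps_lift_power)
  finally show ?thesis
    by (simp add: bern_tail_compose_ell_nth_Suc sum_distrib_left mult.assoc)
qed

lemma C_poly_eq: "C_poly i r = (-1) ^ r * (\<Sum>ns\<in>S_set i r. \<Prod>n\<leftarrow>ns. bern_egf $ n)"
proof -
  have "smult (1 / fact n) (bernpoly n) = bern_egf $ n" for n
    by (simp add: bernpoly_def of_nat_poly)
  then show ?thesis
    by (simp add: C_poly_def)
qed

lemma C_poly_Suc_add:
  "C_poly (Suc k) (Suc k + l) = (-1) ^ (Suc k + l) *
     (\<Sum>h\<le>k. \<Sum>s\<le>l. (L_ser ^ h) $ k * bern_egf $ (h + s + 1) * (L_ser ^ (s + 1)) $ Suc l)"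
  unfolding C_poly_eq sum_S_set_prod_list[of "\<lambda>n. bern_egf $ n", OF bern_egf_nth_0]
  by (simp add: fps_fixpoint_power_nth[OF L_ser_fixpoint] del: power_Suc)

theorem theorem6p4:
  fixes i r :: nat
  assumes "1 \<le> i" and "i \<le> r"
  shows "C_poly i r = G_poly i (r - i + 2)"
proof -
  obtain k where i: "i = Suc k"
    using assms(1) by (cases i) auto
  obtain l where r: "r = Suc k + l"
    using assms(2) i le_Suc_ex by blast
  have sign: "(-1 :: rat poly) ^ (Suc k + l) = (-1) ^ k * (-1) ^ Suc l"
    by (simp add: power_add[symmetric])
  have "C_poly i r = (\<Sum>h\<le>k. \<Sum>s\<le>l.
      ((-1) ^ k * (L_ser ^ h) $ k) * bern_egf $ (h + s + 1) * ((-1) ^ Suc l * (L_ser ^ (s + 1)) $ Suc l))"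
    unfolding i r C_poly_Suc_add sign by (simp add: sum_distrib_left mult_ac)
  also have "\<dots> = G_poly (Suc k) (Suc (Suc l))"
    by (simp add: G_poly_Suc_Suc_Suc ell_power_nth del: power_Suc)
  finally show ?thesis
    using i r by (simp add: numeral_2_eq_2)
qed

end
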